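(* Let $p\ge3$. Let $\mathfrak{S}=\mathbb{Z}_p[[\lambda]]$ with $\delta$-structure determined by $\varphi(\lambda)=(\lambda+p)^p-p$, and let $\iota\colon\mathfrak{S}\to W(\mathbb{Z}_p)$ be the unique $\delta$-ring map lifting the quotient map $\mathfrak{S}\to\mathfrak{S}/\lambda=\mathbb{Z}_p$. Then there exists a unit $x_\lambda\in W(\mathbb{Z}_p)^\times$ such that $\iota(\lambda)=V(F(x_\lambda))$, where $F$ and $V$ are the Witt vector Frobenius and Verschiebung.
   Context: $W(\mathbb{Z}_p)$ denotes the ring of $p$-typical Witt vectors of $\mathbb{Z}_p$, with its canonical $\delta$-ring structure. *)

theory Defs
  imports "HOL-Computational_Algebra.Primes" "HOL-Algebra.Ring" "HOL-Algebra.RingHom"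
begin

text \<open>The p-adic integers Z_p, realised as compatible sequences of residues:
  x n is the residue of x modulo p^n, taken in {0..<p^n}.\<close>
definition Zp :: "nat \<Rightarrow> (nat \<Rightarrow> int) ring" where
  "Zp p = \<lparr> carrier = {x. \<forall>n. 0 \<le> x n \<and> x n < int p ^ n \<and> x (Suc n) mod int p ^ n = x n},
            mult = (\<lambda>x y n. (x n * y n) mod int p ^ n),
            one = (\<lambda>n. 1 mod int p ^ n),
            zero = (\<lambda>n. 0),
            add = (\<lambda>x y n. (x n + y n) mod int p ^ n) \<rparr>"

text \<open>The power series ring Z_p[[lambda]]: s k is the coefficient of lambda^k.\<close>
definition PS :: "nat \<Rightarrow> (nat \<Rightarrow> nat \<Rightarrow> int) ring" where
  "PS p = \<lparr> carrier = {s. \<forall>k. s k \<in> carrier (Zp p)},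
            mult = (\<lambda>s t k n. (\<Sum>i\<le>k. s i n * t (k - i) n) mod int p ^ n),
            one = (\<lambda>k. if k = 0 then \<one>\<^bsub>Zp p\<^esub> else \<zero>\<^bsub>Zp p\<^esub>),
            zero = (\<lambda>k. \<zero>\<^bsub>Zp p\<^esub>),
            add = (\<lambda>s t k. s k \<oplus>\<^bsub>Zp p\<^esub> t k) \<rparr>"

definition lam :: "nat \<Rightarrow> nat \<Rightarrow> nat \<Rightarrow> int" where
  "lam p = (\<lambda>k. if k = 1 then \<one>\<^bsub>Zp p\<^esub> else \<zero>\<^bsub>Zp p\<^esub>)"

text \<open>p-typical Witt vectors of Z_p: a i is the i-th Witt component.
  Ghost components w_n(a) = sum_{i<=n} p^i a_i^(p^(n-i)).\<close>
definition ghost :: "nat \<Rightarrow> (nat \<Rightarrow> nat \<Rightarrow> int) \<Rightarrow> nat \<Rightarrow> nat \<Rightarrow> int" where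
  "ghost p a n = (\<lambda>m. (\<Sum>i\<le>n. int p ^ i * (a i m) ^ (p ^ (n - i))) mod int p ^ m)"

definition Wcarrier :: "nat \<Rightarrow> (nat \<Rightarrow> nat \<Rightarrow> int) set" where
  "Wcarrier p = {a. \<forall>i. a i \<in> carrier (Zp p)}"

text \<open>Since Z_p is p-torsion free, the ghost map is injective and the ring
  operations of W(Z_p) are characterised by being computed componentwise on ghost
  components (the standard definition of Witt vector addition and multiplication).\<close>
definition W :: "nat \<Rightarrow> (nat \<Rightarrow> nat \<Rightarrow> int) ring" where
  "W p = \<lparr> carrier = Wcarrier p,
           mult = (\<lambda>a b. THE c. c \<in> Wcarrier p \<and>
                     (\<forall>n. ghost p c n = ghost p a n \<otimes>\<^bsub>Zp p\<^esub> ghost p b n)),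
           one = (\<lambda>i. if i = 0 then \<one>\<^bsub>Zp p\<^esub> else \<zero>\<^bsub>Zp p\<^esub>),
           zero = (\<lambda>i. \<zero>\<^bsub>Zp p\<^esub>),
           add = (\<lambda>a b. THE c. c \<in> Wcarrier p \<and>
                     (\<forall>n. ghost p c n = ghost p a n \<oplus>\<^bsub>Zp p\<^esub> ghost p b n)) \<rparr>"

definition WF :: "nat \<Rightarrow> (nat \<Rightarrow> nat \<Rightarrow> int) \<Rightarrow> (nat \<Rightarrow> nat \<Rightarrow> int)" where
  "WF p a = (THE c. c \<in> Wcarrier p \<and> (\<forall>n. ghost p c n = ghost p a (Suc n)))"

definition WV :: "nat \<Rightarrow> (nat \<Rightarrow> nat \<Rightarrow> int) \<Rightarrow> (nat \<Rightarrow> nat \<Rightarrow> int)" where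
  "WV p a = (\<lambda>i. if i = 0 then \<zero>\<^bsub>Zp p\<^esub> else a (i - 1))"

text \<open>Canonical delta-structure on W(Z_p): F(a) = a^p + p * delta(a)
  (W(Z_p) is p-torsion free, so delta is determined by this).\<close>
definition Wdelta :: "nat \<Rightarrow> (nat \<Rightarrow> nat \<Rightarrow> int) \<Rightarrow> (nat \<Rightarrow> nat \<Rightarrow> int)" where
  "Wdelta p a = (THE c. c \<in> Wcarrier p \<and>
      WF p a = a [^]\<^bsub>W p\<^esub> p \<oplus>\<^bsub>W p\<^esub> add_pow (W p) p c)"

definition delta_ring :: "('a, 'b) ring_scheme \<Rightarrow> nat \<Rightarrow> ('a \<Rightarrow> 'a) \<Rightarrow> bool" where
  "delta_ring R p \<delta> \<longleftrightarrow>
     \<delta> \<in> carrier R \<rightarrow> carrier R \<and>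
     \<delta> \<zero>\<^bsub>R\<^esub> = \<zero>\<^bsub>R\<^esub> \<and> \<delta> \<one>\<^bsub>R\<^esub> = \<zero>\<^bsub>R\<^esub> \<and>
     (\<forall>x\<in>carrier R. \<forall>y\<in>carrier R.
        \<delta> (x \<otimes>\<^bsub>R\<^esub> y) = (x [^]\<^bsub>R\<^esub> p \<otimes>\<^bsub>R\<^esub> \<delta> y) \<oplus>\<^bsub>R\<^esub> (y [^]\<^bsub>R\<^esub> p \<otimes>\<^bsub>R\<^esub> \<delta> x)
                      \<oplus>\<^bsub>R\<^esub> add_pow R p (\<delta> x \<otimes>\<^bsub>R\<^esub> \<delta> y)) \<and>
     (\<forall>x\<in>carrier R. \<forall>y\<in>carrier R.
        \<delta> (x \<oplus>\<^bsub>R\<^esub> y) \<oplus>\<^bsub>R\<^esub>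
          (\<Oplus>\<^bsub>R\<^esub>i\<in>{1..<p}. add_pow R ((p choose i) div p) (x [^]\<^bsub>R\<^esub> i \<otimes>\<^bsub>R\<^esub> y [^]\<^bsub>R\<^esub> (p - i)))
        = \<delta> x \<oplus>\<^bsub>R\<^esub> \<delta> y)"

definition delta_ring_hom ::
  "('a, 'c) ring_scheme \<Rightarrow> ('a \<Rightarrow> 'a) \<Rightarrow> ('b, 'd) ring_scheme \<Rightarrow> ('b \<Rightarrow> 'b) \<Rightarrow> ('a \<Rightarrow> 'b) \<Rightarrow> bool" where
  "delta_ring_hom R \<delta>R S \<delta>S h \<longleftrightarrow> h \<in> ring_hom R S \<and> (\<forall>x\<in>carrier R. h (\<delta>R x) = \<delta>S (h x))"

end

theory Submission
  imports Defs "HOL-Number_Theory.Number_Theory"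
begin

(* Over Z_p a Witt vector is determined by its ghost components, and a sequence (G n) in Z_p is
   the ghost vector of a Witt vector iff G (n+1) = G n mod p^(n+1) (Dwork; the Frobenius of Z_p is
   trivial). Applying the delta-map iota to phi(lambda) = (lambda + p)^p - p gives F(a) + p = (a + p)^p
   for a = iota(lambda), whose 0-th component is 0; on ghost components this says that a has ghost
   vector g with g 0 = 0 and g (n+1) = (g n + p)^p - p. All g n are divisible by p, and for p >= 3
   g (n+2) = g (n+1) mod p^(n+3), so g 1/p, g 1/p, g 2/p, g 3/p, ... satisfy Dwork's congruences.
   They are the ghost components of a Witt vector x, a unit since all of them are -1 mod p, and the
   ghost components 0, p w_1(x), p w_2(x), ... of V(F(x)) are those of a. *)

lemma fermat_little_int:
  fixes x :: int
  assumes p: "prime p"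
  shows "[x ^ p = x] (mod int p)"
proof -
  have p0: "p > 0" using p prime_gt_0_nat by blast
  define y where "y = nat (x mod int p)"
  have xy: "[x = int y] (mod int p)" using p0 by (simp add: y_def cong_def)
  have "[y ^ p = y] (mod p)"
  proof (cases "p dvd y")
    case True
    then show ?thesis using p0 by (simp add: cong_def dvd_power dvd_trans[of p y "y ^ p"])
  next
    case False
    then have "[y ^ (p - 1) * y = 1 * y] (mod p)"
      using fermat_theorem[OF p] by (intro cong_mult) auto
    then show ?thesis using p0 by (simp add: power_Suc2[symmetric])
  qed
  then have "[int y ^ p = int y] (mod int p)" by (metis cong_int_iff of_nat_power)
  then show ?thesis using xy by (meson cong_pow cong_sym cong_trans)
qed

lemma power_diff_dvd_lift:
  fixes u v d :: int
  assumes "int p dvd d" and "d dvd u - v"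
  shows "d * int p dvd u ^ p - v ^ p"
proof -
  have "[u = v] (mod int p)"
    using assms by (simp add: cong_iff_dvd_diff dvd_trans[of "int p" d])
  then have "[(\<Sum>i<p. v ^ (p - Suc i) * u ^ i) = (\<Sum>i<p. v ^ (p - Suc i) * v ^ i)] (mod int p)"
    by (intro cong_sum cong_mult cong_pow cong_refl)
  also have "(\<Sum>i<p. v ^ (p - Suc i) * v ^ i) = int p * v ^ (p - 1)"
    by (simp add: power_add[symmetric])
  finally have "int p dvd (\<Sum>i<p. v ^ (p - Suc i) * u ^ i)"
    by (simp add: cong_dvd_iff)
  then show ?thesis
    using assms(2) by (simp add: power_diff_sumr2 mult_dvd_mono)
qed

lemma power_diff_dvd_lift_strong:
  fixes u v d :: int
  assumes "int p dvd u" and "int p dvd v" and "d dvd u - v"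
  shows "d * int p ^ (p - 1) dvd u ^ p - v ^ p"
proof -
  have "int p ^ (p - 1) dvd v ^ (p - Suc i) * u ^ i" if "i < p" for i
  proof -
    have "int p ^ (p - Suc i) * int p ^ i dvd v ^ (p - Suc i) * u ^ i"
      using assms by (intro mult_dvd_mono dvd_power_same)
    then show ?thesis using that by (simp add: power_add[symmetric])
  qed
  then have "int p ^ (p - 1) dvd (\<Sum>i<p. v ^ (p - Suc i) * u ^ i)" by (intro dvd_sum) simp
  then show ?thesis
    using assms(3) by (simp add: power_diff_sumr2 mult_dvd_mono)
qed

lemma power_prime_power_cong:
  fixes x :: int
  assumes "prime p"
  shows "[x ^ (p ^ Suc k) = x ^ (p ^ k)] (mod int p ^ Suc k)"
proof (induction k)
  case 0
  then show ?case using fermat_little_int[OF assms] by simp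
next
  case (Suc k)
  then have "int p ^ Suc k * int p dvd (x ^ p ^ Suc k) ^ p - (x ^ p ^ k) ^ p"
    by (intro power_diff_dvd_lift) (simp_all add: cong_iff_dvd_diff)
  then show ?case
    by (simp add: cong_iff_dvd_diff power_mult[symmetric] mult.commute)
qed

lemma cong_mult_cancel_modulus:
  fixes a b c m :: int
  assumes "[c * a = c * b] (mod c * m)" and "c \<noteq> 0"
  shows "[a = b] (mod m)"
  using assms by (simp add: cong_def mod_mult_mult1)

section \<open>p-adic integers as residue sequences\<close>

lemma Zp_carrier_iff:
  "x \<in> carrier (Zp p) \<longleftrightarrow> (\<forall>n. 0 \<le> x n \<and> x n < int p ^ n \<and> x (Suc n) mod int p ^ n = x n)"
  by (simp add: Zp_def)

lemma Zp_zero: "\<zero>\<^bsub>Zp p\<^esub> = (\<lambda>n. 0)"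
  and Zp_one: "\<one>\<^bsub>Zp p\<^esub> = (\<lambda>n. 1 mod int p ^ n)"
  and Zp_mult: "x \<otimes>\<^bsub>Zp p\<^esub> y = (\<lambda>n. (x n * y n) mod int p ^ n)"
  and Zp_add: "x \<oplus>\<^bsub>Zp p\<^esub> y = (\<lambda>n. (x n + y n) mod int p ^ n)"
  by (simp_all add: Zp_def)

lemma Zp_mod:
  assumes "x \<in> carrier (Zp p)"
  shows "x m mod int p ^ m = x m"
  using assms by (simp add: Zp_carrier_iff)

lemma Zp_cong:
  assumes x: "x \<in> carrier (Zp p)" and "k \<le> m" and "p > 0"
  shows "[x m = x k] (mod int p ^ k)"
  using \<open>k \<le> m\<close>
proof (induction m rule: dec_induct)
  case base
  then show ?case by simp
next
  case (step m)
  have "[x (Suc m) = x (Suc m) mod int p ^ m] (mod int p ^ k)"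
    using step(1) by (simp add: cong_def mod_mod_cancel le_imp_power_dvd)
  also have "x (Suc m) mod int p ^ m = x m"
    using x by (simp add: Zp_carrier_iff)
  finally show ?case using step.IH by (rule cong_trans)
qed

lemma Zp_memI:
  assumes "\<And>m. [F (Suc m) = F m] (mod int p ^ m)" and "p > 0"
  shows "(\<lambda>m. F m mod int p ^ m) \<in> carrier (Zp p)"
proof -
  have "F (Suc m) mod int p ^ Suc m mod int p ^ m = F m mod int p ^ m" for m
    using assms(1)[of m] by (simp add: cong_def mod_mod_cancel le_imp_power_dvd)
  then show ?thesis using assms(2) by (simp add: Zp_carrier_iff)
qed

lemma Zp_eqI:
  assumes "x \<in> carrier (Zp p)" and "y \<in> carrier (Zp p)"
    and "\<And>m. [x m = y m] (mod int p ^ m)"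
  shows "x = y"
  using assms by (metis Zp_mod cong_def ext)

definition Zp_of_int :: "nat \<Rightarrow> int \<Rightarrow> nat \<Rightarrow> int" where
  "Zp_of_int p z = (\<lambda>m. z mod int p ^ m)"

lemma Zp_of_int_closed: "p > 0 \<Longrightarrow> Zp_of_int p z \<in> carrier (Zp p)"
  unfolding Zp_of_int_def by (rule Zp_memI) simp_all

lemma Zp_zero_closed: "p > 0 \<Longrightarrow> \<zero>\<^bsub>Zp p\<^esub> \<in> carrier (Zp p)"
  by (simp add: Zp_carrier_iff Zp_zero)

lemma Zp_one_closed: "p > 0 \<Longrightarrow> \<one>\<^bsub>Zp p\<^esub> \<in> carrier (Zp p)"
  using Zp_of_int_closed[of p 1] by (simp add: Zp_of_int_def Zp_one)

lemma Zp_add_closed: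
  assumes "x \<in> carrier (Zp p)" and "y \<in> carrier (Zp p)" and "p > 0"
  shows "x \<oplus>\<^bsub>Zp p\<^esub> y \<in> carrier (Zp p)"
  unfolding Zp_add by (rule Zp_memI) (use assms in \<open>auto intro!: cong_add Zp_cong\<close>)

lemma Zp_mult_closed:
  assumes "x \<in> carrier (Zp p)" and "y \<in> carrier (Zp p)" and "p > 0"
  shows "x \<otimes>\<^bsub>Zp p\<^esub> y \<in> carrier (Zp p)"
  unfolding Zp_mult by (rule Zp_memI) (use assms in \<open>auto intro!: cong_mult Zp_cong\<close>)

(* r / p^k for r divisible by p^k: its residue mod p^m is read off from r mod p^(m+k). *)
definition Zp_div_pow :: "nat \<Rightarrow> nat \<Rightarrow> (nat \<Rightarrow> int) \<Rightarrow> nat \<Rightarrow> int" where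
  "Zp_div_pow p k r = (\<lambda>m. r (m + k) div int p ^ k)"

lemma Zp_div_pow:
  assumes r: "r \<in> carrier (Zp p)" and "r k = 0" and p: "p > 0"
  shows "Zp_div_pow p k r \<in> carrier (Zp p)"
    and "[int p ^ k * Zp_div_pow p k r m = r m] (mod int p ^ m)"
proof -
  let ?q = "Zp_div_pow p k r"
  have "int p ^ k dvd r (m + k)" for m
    using Zp_cong[OF r, of k "m + k"] p \<open>r k = 0\<close> by (simp add: cong_0_iff)
  then have q: "int p ^ k * ?q m = r (m + k)" for m
    by (simp add: Zp_div_pow_def)
  show "[int p ^ k * ?q m = r m] (mod int p ^ m)"
    unfolding q using Zp_cong[OF r, of m "m + k"] p by simp
  have range: "0 \<le> ?q m \<and> ?q m < int p ^ m" for m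
  proof -
    have "0 \<le> int p ^ k * ?q m" "int p ^ k * ?q m < int p ^ k * int p ^ m"
      using r unfolding q Zp_carrier_iff by (metis power_add mult.commute)+
    moreover have "int p ^ k > 0" using p by simp
    ultimately show ?thesis by (simp add: zero_le_mult_iff mult_less_cancel_left_pos)
  qed
  have "[int p ^ k * ?q (Suc m) = int p ^ k * ?q m] (mod int p ^ k * int p ^ m)" for m
    unfolding q using Zp_cong[OF r, of "m + k" "Suc m + k"] p by (simp add: power_add mult.commute)
  then have "[?q (Suc m) = ?q m] (mod int p ^ m)" for m
    by (rule cong_mult_cancel_modulus) (use p in simp)
  then show "?q \<in> carrier (Zp p)"
    using range by (simp add: Zp_carrier_iff cong_def)
qed

definition Zp_inverse :: "nat \<Rightarrow> (nat \<Rightarrow> int) \<Rightarrow> nat \<Rightarrow> int" where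
  "Zp_inverse p z = (\<lambda>m. modular_inverse (int p ^ m) (z m))"

lemma Zp_coprime_power:
  assumes p: "prime p" and z: "z \<in> carrier (Zp p)" and "z 1 \<noteq> 0"
  shows "coprime (z m) (int p ^ m)"
proof (cases "m = 0")
  case False
  have "0 \<le> z 1" "z 1 < int p" using z by (auto simp: Zp_carrier_iff dest: spec[of _ 1])
  then have "\<not> int p dvd z 1" using \<open>z 1 \<noteq> 0\<close> by (auto dest: zdvd_imp_le)
  moreover have "[z m = z 1] (mod int p)"
    using Zp_cong[OF z, of 1 m] False p prime_gt_0_nat by simp
  ultimately have "\<not> int p dvd z m" by (simp add: cong_dvd_iff)
  then show ?thesis
    using p by (simp add: prime_imp_coprime coprime_commute)
qed simp

lemma Zp_inverse:
  assumes p: "prime p" and z: "z \<in> carrier (Zp p)" and "z 1 \<noteq> 0"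
  shows "Zp_inverse p z \<in> carrier (Zp p)"
    and "z \<otimes>\<^bsub>Zp p\<^esub> Zp_inverse p z = \<one>\<^bsub>Zp p\<^esub>"
proof -
  let ?w = "Zp_inverse p z"
  have p0: "p > 0" using p prime_gt_0_nat by blast
  have inv: "[z m * ?w m = 1] (mod int p ^ m)" for m
    using Zp_coprime_power[OF assms] by (simp add: Zp_inverse_def cong_modular_inverse1)
  show "z \<otimes>\<^bsub>Zp p\<^esub> ?w = \<one>\<^bsub>Zp p\<^esub>"
    using inv by (simp add: cong_def fun_eq_iff Zp_mult Zp_one)
  have "[z m * (?w (Suc m) mod int p ^ m) = z (Suc m) * ?w (Suc m)] (mod int p ^ m)" for m
    using Zp_cong[OF z, of m "Suc m"] p0 by (intro cong_mult) (simp_all add: cong_sym cong_def)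
  moreover have "[z (Suc m) * ?w (Suc m) = 1] (mod int p ^ m)" for m
    using inv[of "Suc m"] by (rule cong_dvd_modulus) (simp add: le_imp_power_dvd)
  ultimately have eq: "modular_inverse (int p ^ m) (z m) = ?w (Suc m) mod int p ^ m" for m
    using p0 by (intro modular_inverse_int_eqI) (auto intro: cong_trans)
  have "0 \<le> ?w m \<and> ?w m < int p ^ m \<and> ?w (Suc m) mod int p ^ m = ?w m" for m
    using eq[of m] p0 by (simp add: Zp_inverse_def modular_inverse_int_nonneg modular_inverse_int_less)
  then show "?w \<in> carrier (Zp p)"
    by (simp add: Zp_carrier_iff)
qed

section \<open>Witt vectors through ghost components\<close>

definition ghost_sum :: "nat \<Rightarrow> (nat \<Rightarrow> nat \<Rightarrow> int) \<Rightarrow> nat \<Rightarrow> nat \<Rightarrow> int" where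
  "ghost_sum p a n m = (\<Sum>i\<le>n. int p ^ i * a i m ^ p ^ (n - i))"

lemma ghost_eq_ghost_sum_mod: "ghost p a n m = ghost_sum p a n m mod int p ^ m"
  by (simp add: ghost_def ghost_sum_def)

lemma ghost_sum_split:
  "ghost_sum p a n m = (\<Sum>i<n. int p ^ i * a i m ^ p ^ (n - i)) + int p ^ n * a n m"
  by (simp add: ghost_sum_def lessThan_Suc_atMost[symmetric])

lemma Wcarrier_iff: "a \<in> Wcarrier p \<longleftrightarrow> (\<forall>i. a i \<in> carrier (Zp p))"
  by (simp add: Wcarrier_def)

lemma ghost_sum_cong_level:
  assumes "a \<in> Wcarrier p" and "k \<le> m" and "p > 0"
  shows "[ghost_sum p a n m = ghost_sum p a n k] (mod int p ^ k)"
  unfolding ghost_sum_def using assms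
  by (intro cong_sum cong_mult cong_pow cong_refl Zp_cong) (auto simp: Wcarrier_iff)

lemma ghost_in_carrier:
  assumes "a \<in> Wcarrier p" and "p > 0"
  shows "ghost p a n \<in> carrier (Zp p)"
proof -
  have "ghost p a n = (\<lambda>m. ghost_sum p a n m mod int p ^ m)"
    by (simp add: ghost_eq_ghost_sum_mod fun_eq_iff)
  also have "\<dots> \<in> carrier (Zp p)"
    by (rule Zp_memI) (use ghost_sum_cong_level[OF assms(1) _ assms(2)] assms(2) in auto)
  finally show ?thesis .
qed

lemma ghost_partial_sum_cong:
  assumes p: "prime p"
  shows "[(\<Sum>i<Suc n. int p ^ i * a i m ^ p ^ (Suc n - i)) = ghost_sum p a n m] (mod int p ^ Suc n)"
  unfolding ghost_sum_def lessThan_Suc_atMost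
proof (rule cong_sum)
  fix i assume "i \<in> {..n}"
  then have i: "i \<le> n" by simp
  have "int p ^ i * int p ^ Suc (n - i) dvd int p ^ i * (a i m ^ p ^ Suc (n - i) - a i m ^ p ^ (n - i))"
    using power_prime_power_cong[OF p] by (intro mult_dvd_mono) (simp_all add: cong_iff_dvd_diff)
  moreover have "int p ^ i * int p ^ Suc (n - i) = int p ^ Suc n"
    using i by (simp flip: power_add)
  moreover have "Suc n - i = Suc (n - i)"
    using i by simp
  ultimately show "[int p ^ i * a i m ^ p ^ (Suc n - i) = int p ^ i * a i m ^ p ^ (n - i)] (mod int p ^ Suc n)"
    by (simp only: cong_iff_dvd_diff right_diff_distrib)
qed

lemma ghost_sum_Suc_cong:
  assumes "prime p"
  shows "[ghost_sum p a (Suc n) m = ghost_sum p a n m] (mod int p ^ Suc n)"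
proof -
  have "[ghost_sum p a (Suc n) m = ghost_sum p a n m + 0] (mod int p ^ Suc n)"
    unfolding ghost_sum_split[of p a "Suc n"]
    using ghost_partial_sum_cong[OF assms] by (intro cong_add) (simp_all add: cong_0_iff)
  then show ?thesis by simp
qed

(* G (n+1) = G n mod p^(n+1), stated on residues at level n+1. *)
definition dwork_family :: "nat \<Rightarrow> (nat \<Rightarrow> nat \<Rightarrow> int) \<Rightarrow> bool" where
  "dwork_family p G \<longleftrightarrow> (\<forall>n. G n \<in> carrier (Zp p)) \<and> (\<forall>n. G (Suc n) (Suc n) = G n (Suc n))"

lemma dwork_family_carrier: "dwork_family p G \<Longrightarrow> G n \<in> carrier (Zp p)"
  and dwork_family_Suc: "dwork_family p G \<Longrightarrow> G (Suc n) (Suc n) = G n (Suc n)"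
  by (simp_all add: dwork_family_def)

lemma dwork_family_ghost:
  assumes "prime p" and "a \<in> Wcarrier p"
  shows "dwork_family p (ghost p a)"
  using assms ghost_in_carrier[OF assms(2)] ghost_sum_Suc_cong[OF assms(1), of a _ "Suc _"]
  by (simp add: dwork_family_def ghost_eq_ghost_sum_mod cong_def prime_gt_0_nat)

lemma ghost_inj:
  assumes a: "a \<in> Wcarrier p" and b: "b \<in> Wcarrier p" and p: "p > 0"
    and ghost_eq: "\<And>n. ghost p a n = ghost p b n"
  shows "a = b"
proof
  fix n
  show "a n = b n"
  proof (induction n rule: less_induct)
    case (less n)
    have an: "a n \<in> carrier (Zp p)" and bn: "b n \<in> carrier (Zp p)"
      using a b by (auto simp: Wcarrier_iff)
    have "[a n m = b n m] (mod int p ^ m)" for m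
    proof -
      have "(\<Sum>i<n. int p ^ i * a i (m + n) ^ p ^ (n - i)) = (\<Sum>i<n. int p ^ i * b i (m + n) ^ p ^ (n - i))"
        using less by simp
      moreover have "[ghost_sum p a n (m + n) = ghost_sum p b n (m + n)] (mod int p ^ (m + n))"
        using ghost_eq[of n] by (simp add: ghost_eq_ghost_sum_mod cong_def fun_eq_iff)
      ultimately have "[int p ^ n * a n (m + n) = int p ^ n * b n (m + n)] (mod int p ^ n * int p ^ m)"
        by (simp add: ghost_sum_split cong_add_lcancel power_add mult.commute)
      then have "[a n (m + n) = b n (m + n)] (mod int p ^ m)"
        by (rule cong_mult_cancel_modulus) (use p in simp)
      then show ?thesis
        using Zp_cong[OF an, of m "m + n"] Zp_cong[OF bn, of m "m + n"] p
        by (meson cong_sym cong_trans le_add1)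
    qed
    then show "a n = b n" by (rule Zp_eqI[OF an bn])
  qed
qed

function witt_of_ghost :: "nat \<Rightarrow> (nat \<Rightarrow> nat \<Rightarrow> int) \<Rightarrow> nat \<Rightarrow> nat \<Rightarrow> int" where
  "witt_of_ghost p G n = Zp_div_pow p n
     (\<lambda>m. (G n m - (\<Sum>i<n. int p ^ i * witt_of_ghost p G i m ^ p ^ (n - i))) mod int p ^ m)"
  by pat_completeness auto
termination by (relation "measure (\<lambda>(p, G, n). n)") auto

declare witt_of_ghost.simps [simp del]

lemma witt_of_ghost_step:
  assumes p: "prime p" and G: "dwork_family p G"
    and IH: "\<And>i. i < n \<Longrightarrow> witt_of_ghost p G i \<in> carrier (Zp p) \<and> ghost p (witt_of_ghost p G) i = G i"
  shows "witt_of_ghost p G n \<in> carrier (Zp p)" and "ghost p (witt_of_ghost p G) n = G n"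
proof -
  have p0: "p > 0" using p prime_gt_0_nat by blast
  let ?a = "witt_of_ghost p G"
  define S where "S m = (\<Sum>i<n. int p ^ i * ?a i m ^ p ^ (n - i))" for m
  define r where "r m = (G n m - S m) mod int p ^ m" for m
  have an: "?a n = Zp_div_pow p n r"
    unfolding r_def[abs_def] S_def by (rule witt_of_ghost.simps)
  have S_cong: "[S m' = S m] (mod int p ^ m)" if "m \<le> m'" for m m'
    unfolding S_def using IH that p0
    by (intro cong_sum cong_mult cong_pow cong_refl Zp_cong) auto
  have r: "r \<in> carrier (Zp p)"
    unfolding r_def[abs_def] using p0
    by (intro Zp_memI cong_diff S_cong Zp_cong[OF dwork_family_carrier[OF G]]) auto
  have "r n = 0"
  proof (cases n)
    case (Suc k)
    have "[S n = ghost_sum p ?a k n] (mod int p ^ n)"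
      unfolding S_def Suc by (rule ghost_partial_sum_cong[OF p])
    also have "[ghost_sum p ?a k n = G k n] (mod int p ^ n)"
    proof -
      have "ghost_sum p ?a k n mod int p ^ n = G k n"
        using IH[of k] Suc by (simp only: ghost_eq_ghost_sum_mod fun_eq_iff)
      then show ?thesis
        using Zp_mod[OF dwork_family_carrier[OF G]] by (simp add: cong_def)
    qed
    also have "G k n = G n n"
      using dwork_family_Suc[OF G, of k] Suc by simp
    finally show ?thesis by (simp add: r_def cong_def mod_diff_cong)
  qed (simp add: r_def)
  then show "?a n \<in> carrier (Zp p)"
    unfolding an by (rule Zp_div_pow(1)[OF r _ p0])
  have "[S m + int p ^ n * ?a n m = S m + r m] (mod int p ^ m)" for m
    unfolding an by (intro cong_add cong_refl Zp_div_pow(2)[OF r \<open>r n = 0\<close> p0])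
  then have "[ghost_sum p ?a n m = G n m] (mod int p ^ m)" for m
    by (simp add: ghost_sum_split S_def r_def cong_def mod_add_right_eq)
  then show "ghost p ?a n = G n"
    by (simp add: fun_eq_iff ghost_eq_ghost_sum_mod cong_def Zp_mod[OF dwork_family_carrier[OF G]])
qed

lemma witt_of_ghost:
  assumes "prime p" and "dwork_family p G"
  shows "witt_of_ghost p G \<in> Wcarrier p" and "ghost p (witt_of_ghost p G) n = G n"
proof -
  have "witt_of_ghost p G n \<in> carrier (Zp p) \<and> ghost p (witt_of_ghost p G) n = G n" for n
  proof (induction n rule: less_induct)
    case (less n)
    show ?case using witt_of_ghost_step[OF assms less] by blast
  qed
  then show "witt_of_ghost p G \<in> Wcarrier p" and "ghost p (witt_of_ghost p G) n = G n"
    by (simp_all add: Wcarrier_iff)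
qed

lemma the_ghost_preimage:
  assumes "prime p" and "dwork_family p G"
  shows "(THE c. c \<in> Wcarrier p \<and> (\<forall>n. ghost p c n = G n)) = witt_of_ghost p G"
  using witt_of_ghost[OF assms] ghost_inj[where p = p] prime_gt_0_nat[OF assms(1)]
  by (intro the_equality) auto

lemma dwork_family_shift:
  assumes G: "dwork_family p G"
  shows "dwork_family p (\<lambda>n. G (Suc n))"
proof -
  have compat: "G k (Suc m) mod int p ^ m = G k m" for k m
    using dwork_family_carrier[OF G] by (simp add: Zp_carrier_iff)
  have "G (Suc (Suc n)) (Suc n) = G (Suc n) (Suc n)" for n
    using compat[of "Suc (Suc n)" "Suc n"] compat[of "Suc n" "Suc n"] dwork_family_Suc[OF G, of "Suc n"]
    by simp
  then show ?thesis
    using dwork_family_carrier[OF G] by (simp add: dwork_family_def)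
qed

lemma dwork_family_cong:
  assumes G: "dwork_family p G" and "k \<le> Suc n" and "k \<le> m" and p: "p > 0"
  shows "[G (Suc n) m = G n m] (mod int p ^ k)"
proof -
  have level: "[G j m = G j (Suc n)] (mod int p ^ k)" for j
    using Zp_cong[OF dwork_family_carrier[OF G], of k m j] Zp_cong[OF dwork_family_carrier[OF G], of k "Suc n" j]
      assms
    by (meson cong_sym cong_trans)
  have "[G (Suc n) m = G (Suc n) (Suc n)] (mod int p ^ k)"
    by (rule level)
  also have "G (Suc n) (Suc n) = G n (Suc n)"
    by (rule dwork_family_Suc[OF G])
  also have "[G n (Suc n) = G n m] (mod int p ^ k)"
    by (rule cong_sym[OF level])
  finally show ?thesis .
qed

lemma W_carrier [simp]: "carrier (W p) = Wcarrier p"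
  by (simp add: W_def)

lemma add_pow_0: "add_pow R (0::nat) a = \<zero>\<^bsub>R\<^esub>"
  and add_pow_Suc: "add_pow R (Suc k) a = add_pow R k a \<oplus>\<^bsub>R\<^esub> a"
  by (simp_all add: add_pow_def)

definition frobenius_defect :: "nat \<Rightarrow> (nat \<Rightarrow> nat \<Rightarrow> int) \<Rightarrow> nat \<Rightarrow> nat \<Rightarrow> int" where
  "frobenius_defect p G n = (\<lambda>k. (G (Suc n) k - G n k ^ p) mod int p ^ k)"

definition ghost_delta :: "nat \<Rightarrow> (nat \<Rightarrow> nat \<Rightarrow> int) \<Rightarrow> nat \<Rightarrow> nat \<Rightarrow> int" where
  "ghost_delta p G n = Zp_div_pow p 1 (frobenius_defect p G n)"

context
  fixes p :: nat
  assumes prime: "prime p"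
begin

lemma p_pos: "p > 0"
  using prime prime_gt_0_nat by blast

lemma ghost_preimage:
  assumes "dwork_family p G"
  shows "(THE c. c \<in> Wcarrier p \<and> (\<forall>n. ghost p c n = G n)) \<in> Wcarrier p"
    and "ghost p (THE c. c \<in> Wcarrier p \<and> (\<forall>n. ghost p c n = G n)) n = G n"
  using witt_of_ghost[OF prime assms] by (simp_all add: the_ghost_preimage[OF prime assms])

lemma W_add:
  assumes a: "a \<in> Wcarrier p" and b: "b \<in> Wcarrier p"
  shows "a \<oplus>\<^bsub>W p\<^esub> b \<in> Wcarrier p"
    and "ghost p (a \<oplus>\<^bsub>W p\<^esub> b) n = ghost p a n \<oplus>\<^bsub>Zp p\<^esub> ghost p b n"
proof -
  have "dwork_family p (\<lambda>n. ghost p a n \<oplus>\<^bsub>Zp p\<^esub> ghost p b n)"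
    using dwork_family_ghost[OF prime a] dwork_family_ghost[OF prime b] p_pos
    by (auto simp: dwork_family_def Zp_add_closed) (simp add: Zp_add)
  then show "a \<oplus>\<^bsub>W p\<^esub> b \<in> Wcarrier p"
    and "ghost p (a \<oplus>\<^bsub>W p\<^esub> b) n = ghost p a n \<oplus>\<^bsub>Zp p\<^esub> ghost p b n"
    unfolding W_def by (simp_all add: ghost_preimage)
qed

lemma W_mult:
  assumes a: "a \<in> Wcarrier p" and b: "b \<in> Wcarrier p"
  shows "a \<otimes>\<^bsub>W p\<^esub> b \<in> Wcarrier p"
    and "ghost p (a \<otimes>\<^bsub>W p\<^esub> b) n = ghost p a n \<otimes>\<^bsub>Zp p\<^esub> ghost p b n"
proof -
  have "dwork_family p (\<lambda>n. ghost p a n \<otimes>\<^bsub>Zp p\<^esub> ghost p b n)"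
    using dwork_family_ghost[OF prime a] dwork_family_ghost[OF prime b] p_pos
    by (auto simp: dwork_family_def Zp_mult_closed) (simp add: Zp_mult)
  then show "a \<otimes>\<^bsub>W p\<^esub> b \<in> Wcarrier p"
    and "ghost p (a \<otimes>\<^bsub>W p\<^esub> b) n = ghost p a n \<otimes>\<^bsub>Zp p\<^esub> ghost p b n"
    unfolding W_def by (simp_all add: ghost_preimage)
qed

lemma W_one: "\<one>\<^bsub>W p\<^esub> \<in> Wcarrier p" "ghost p \<one>\<^bsub>W p\<^esub> n = \<one>\<^bsub>Zp p\<^esub>"
proof -
  show "\<one>\<^bsub>W p\<^esub> \<in> Wcarrier p"
    using Zp_one_closed Zp_zero_closed p_pos by (simp add: W_def Wcarrier_iff)
  have "ghost_sum p \<one>\<^bsub>W p\<^esub> n m = (\<Sum>i\<le>n. if i = 0 then (1 mod int p ^ m) ^ p ^ n else 0)" for m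
    unfolding ghost_sum_def using p_pos by (intro sum.cong) (auto simp: W_def Zp_one Zp_zero)
  then show "ghost p \<one>\<^bsub>W p\<^esub> n = \<one>\<^bsub>Zp p\<^esub>"
    by (simp add: fun_eq_iff ghost_eq_ghost_sum_mod Zp_one power_mod)
qed

lemma W_zero: "\<zero>\<^bsub>W p\<^esub> \<in> Wcarrier p" "ghost p \<zero>\<^bsub>W p\<^esub> n = \<zero>\<^bsub>Zp p\<^esub>"
proof -
  show "\<zero>\<^bsub>W p\<^esub> \<in> Wcarrier p"
    using Zp_zero_closed p_pos by (simp add: W_def Wcarrier_iff)
  show "ghost p \<zero>\<^bsub>W p\<^esub> n = \<zero>\<^bsub>Zp p\<^esub>"
    using p_pos by (simp add: W_def fun_eq_iff ghost_eq_ghost_sum_mod ghost_sum_def Zp_zero power_0_left)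
qed

lemma W_pow:
  assumes a: "a \<in> Wcarrier p"
  shows "a [^]\<^bsub>W p\<^esub> (k::nat) \<in> Wcarrier p"
    and "[ghost p (a [^]\<^bsub>W p\<^esub> k) n m = ghost p a n m ^ k] (mod int p ^ m)"
proof (induction k)
  case 0
  show "a [^]\<^bsub>W p\<^esub> (0::nat) \<in> Wcarrier p" using W_one by simp
  show "[ghost p (a [^]\<^bsub>W p\<^esub> (0::nat)) n m = ghost p a n m ^ 0] (mod int p ^ m)"
    using W_one by (simp add: Zp_one cong_def)
next
  case (Suc k)
  show "a [^]\<^bsub>W p\<^esub> Suc k \<in> Wcarrier p" using Suc W_mult(1)[OF _ a] by simp
  have "[ghost p (a [^]\<^bsub>W p\<^esub> k) n m * ghost p a n m = ghost p a n m ^ k * ghost p a n m] (mod int p ^ m)"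
    using Suc by (intro cong_mult cong_refl)
  then show "[ghost p (a [^]\<^bsub>W p\<^esub> Suc k) n m = ghost p a n m ^ Suc k] (mod int p ^ m)"
    using Suc W_mult(2)[OF _ a] by (simp add: Zp_mult cong_def mult.commute)
qed

lemma W_add_pow:
  assumes a: "a \<in> Wcarrier p"
  shows "add_pow (W p) (k::nat) a \<in> Wcarrier p"
    and "[ghost p (add_pow (W p) k a) n m = int k * ghost p a n m] (mod int p ^ m)"
proof (induction k)
  case 0
  show "add_pow (W p) (0::nat) a \<in> Wcarrier p" using W_zero by (simp add: add_pow_0)
  show "[ghost p (add_pow (W p) (0::nat) a) n m = int 0 * ghost p a n m] (mod int p ^ m)"
    using W_zero by (simp add: add_pow_0 Zp_zero)
next
  case (Suc k)
  show "add_pow (W p) (Suc k) a \<in> Wcarrier p"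
    using Suc W_add(1)[OF _ a] by (simp add: add_pow_Suc)
  have "[ghost p (add_pow (W p) k a) n m + ghost p a n m = int k * ghost p a n m + ghost p a n m] (mod int p ^ m)"
    using Suc by (intro cong_add cong_refl)
  then show "[ghost p (add_pow (W p) (Suc k) a) n m = int (Suc k) * ghost p a n m] (mod int p ^ m)"
    using Suc W_add(2)[OF _ a] by (simp add: add_pow_Suc Zp_add cong_def algebra_simps)
qed

lemma WF:
  assumes a: "a \<in> Wcarrier p"
  shows "WF p a \<in> Wcarrier p" and "ghost p (WF p a) n = ghost p a (Suc n)"
  using ghost_preimage[OF dwork_family_shift[OF dwork_family_ghost[OF prime a]]]
  by (simp_all add: WF_def)

lemma WV:
  assumes a: "a \<in> Wcarrier p"
  shows "WV p a \<in> Wcarrier p"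
    and "ghost p (WV p a) 0 = \<zero>\<^bsub>Zp p\<^esub>"
    and "ghost p (WV p a) (Suc n) m = (int p * ghost p a n m) mod int p ^ m"
proof -
  show "WV p a \<in> Wcarrier p"
    using a Zp_zero_closed p_pos by (auto simp: WV_def Wcarrier_iff)
  show "ghost p (WV p a) 0 = \<zero>\<^bsub>Zp p\<^esub>"
    by (simp add: fun_eq_iff ghost_eq_ghost_sum_mod ghost_sum_def WV_def Zp_zero)
  have "ghost_sum p (WV p a) (Suc n) m = (\<Sum>i\<le>n. int p * (int p ^ i * a i m ^ p ^ (n - i)))"
    unfolding ghost_sum_def sum.atMost_Suc_shift using p_pos by (simp add: WV_def Zp_zero mult.assoc)
  also have "\<dots> = int p * ghost_sum p a n m"
    by (simp add: ghost_sum_def sum_distrib_left)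
  finally show "ghost p (WV p a) (Suc n) m = (int p * ghost p a n m) mod int p ^ m"
    by (simp add: ghost_eq_ghost_sum_mod mod_mult_right_eq)
qed


lemma frobenius_defect:
  assumes G: "dwork_family p G"
  shows "frobenius_defect p G n \<in> carrier (Zp p)"
    and "frobenius_defect p G n 1 = 0"
    and "frobenius_defect p G (Suc n) (Suc (Suc n)) = frobenius_defect p G n (Suc (Suc n))"
proof -
  show "frobenius_defect p G n \<in> carrier (Zp p)"
    unfolding frobenius_defect_def using p_pos
    by (intro Zp_memI cong_diff cong_pow Zp_cong[OF dwork_family_carrier[OF G]]) auto
  have "[G (Suc n) 1 = G n 1] (mod int p)"
    using dwork_family_cong[OF G, of 1 n 1] p_pos by simp
  also have "[G n 1 = G n 1 ^ p] (mod int p)"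
    by (rule cong_sym[OF fermat_little_int[OF prime]])
  finally have "int p dvd G (Suc n) 1 - G n 1 ^ p"
    by (simp only: cong_iff_dvd_diff)
  then show "frobenius_defect p G n 1 = 0"
    unfolding frobenius_defect_def power_one_right by (rule dvd_imp_mod_0)
  have "int p ^ Suc n dvd G (Suc n) (Suc (Suc n)) - G n (Suc (Suc n))"
    using dwork_family_cong[OF G, of "Suc n" n "Suc (Suc n)"] p_pos by (simp add: cong_iff_dvd_diff)
  then have "int p ^ Suc n * int p dvd G (Suc n) (Suc (Suc n)) ^ p - G n (Suc (Suc n)) ^ p"
    by (intro power_diff_dvd_lift) simp
  then have "[G (Suc n) (Suc (Suc n)) ^ p = G n (Suc (Suc n)) ^ p] (mod int p ^ Suc (Suc n))"
    by (simp add: cong_iff_dvd_diff mult.commute)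
  then show "frobenius_defect p G (Suc n) (Suc (Suc n)) = frobenius_defect p G n (Suc (Suc n))"
    unfolding frobenius_defect_def cong_def dwork_family_Suc[OF G, of "Suc n"]
    by (intro mod_diff_cong) simp_all
qed

lemma dwork_family_ghost_delta:
  assumes G: "dwork_family p G"
  shows "dwork_family p (ghost_delta p G)"
    and "[int p * ghost_delta p G n m = G (Suc n) m - G n m ^ p] (mod int p ^ m)"
proof -
  note defect = frobenius_defect[OF G]
  show "dwork_family p (ghost_delta p G)"
    using Zp_div_pow(1)[OF defect(1,2) p_pos] defect(3)
    by (simp add: dwork_family_def ghost_delta_def Zp_div_pow_def)
  have "[int p * ghost_delta p G n m = frobenius_defect p G n m] (mod int p ^ m)"
    using Zp_div_pow(2)[OF defect(1,2) p_pos] by (simp add: ghost_delta_def)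
  then show "[int p * ghost_delta p G n m = G (Suc n) m - G n m ^ p] (mod int p ^ m)"
    by (simp add: frobenius_defect_def)
qed

lemma ghost_add_add_pow:
  assumes a: "a \<in> Wcarrier p" and d: "d \<in> Wcarrier p"
  shows "[ghost p (a \<oplus>\<^bsub>W p\<^esub> add_pow (W p) k d) n m = ghost p a n m + int k * ghost p d n m] (mod int p ^ m)"
proof -
  have "ghost p (a \<oplus>\<^bsub>W p\<^esub> add_pow (W p) k d) n m = (ghost p a n m + ghost p (add_pow (W p) k d) n m) mod int p ^ m"
    by (simp add: W_add(2)[OF a W_add_pow(1)[OF d]] Zp_add)
  then have "[ghost p (a \<oplus>\<^bsub>W p\<^esub> add_pow (W p) k d) n m = ghost p a n m + ghost p (add_pow (W p) k d) n m] (mod int p ^ m)"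
    by (simp add: cong_def)
  also have "[ghost p a n m + ghost p (add_pow (W p) k d) n m = ghost p a n m + int k * ghost p d n m] (mod int p ^ m)"
    by (intro cong_add cong_refl W_add_pow(2)[OF d])
  finally show ?thesis .
qed

lemma W_add_pow_prime_cancel:
  assumes b: "b \<in> Wcarrier p" and c: "c \<in> Wcarrier p" and c': "c' \<in> Wcarrier p"
    and eq: "b \<oplus>\<^bsub>W p\<^esub> add_pow (W p) p c = b \<oplus>\<^bsub>W p\<^esub> add_pow (W p) p c'"
  shows "c = c'"
proof (rule ghost_inj[OF c c' p_pos])
  fix n
  have ghost_eq: "[ghost p b n m + int p * ghost p c n m = ghost p b n m + int p * ghost p c' n m] (mod int p ^ m)" for m
  proof -
    have "[ghost p (b \<oplus>\<^bsub>W p\<^esub> add_pow (W p) p c') n m = ghost p b n m + int p * ghost p c n m] (mod int p ^ m)"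
      using ghost_add_add_pow[OF b c, of p] unfolding eq .
    from cong_trans[OF cong_sym[OF this] ghost_add_add_pow[OF b c', of p n m]] show ?thesis .
  qed
  have "[int p * ghost p c n (Suc m) = int p * ghost p c' n (Suc m)] (mod int p * int p ^ m)" for m
    using ghost_eq[of "Suc m"] unfolding cong_add_lcancel by simp
  then have top: "[ghost p c n (Suc m) = ghost p c' n (Suc m)] (mod int p ^ m)" for m
    by (rule cong_mult_cancel_modulus) (use p_pos in simp)
  have level: "[ghost p d n (Suc m) = ghost p d n m] (mod int p ^ m)" if "d \<in> Wcarrier p" for d m
    using Zp_cong[OF ghost_in_carrier[OF that p_pos], of m "Suc m" n] p_pos by simp
  have "[ghost p c n m = ghost p c' n m] (mod int p ^ m)" for m
    using cong_trans[OF cong_trans[OF cong_sym[OF level[OF c, of m]] top[of m]] level[OF c', of m]] .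
  then show "ghost p c n = ghost p c' n"
    by (rule Zp_eqI[OF ghost_in_carrier[OF c p_pos] ghost_in_carrier[OF c' p_pos]])
qed

lemma WF_eq_pow_add_pow:
  assumes a: "a \<in> Wcarrier p"
  obtains c where "c \<in> Wcarrier p" and "WF p a = a [^]\<^bsub>W p\<^esub> p \<oplus>\<^bsub>W p\<^esub> add_pow (W p) p c"
proof
  let ?G = "ghost_delta p (ghost p a)"
  let ?c = "witt_of_ghost p ?G"
  have G: "dwork_family p ?G"
    by (rule dwork_family_ghost_delta(1)[OF dwork_family_ghost[OF prime a]])
  show c: "?c \<in> Wcarrier p"
    by (rule witt_of_ghost(1)[OF prime G])
  have rhs: "a [^]\<^bsub>W p\<^esub> p \<oplus>\<^bsub>W p\<^esub> add_pow (W p) p ?c \<in> Wcarrier p"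
    using a c by (intro W_add(1) W_pow(1) W_add_pow(1))
  show "WF p a = a [^]\<^bsub>W p\<^esub> p \<oplus>\<^bsub>W p\<^esub> add_pow (W p) p ?c"
  proof (rule ghost_inj[OF WF(1)[OF a] rhs p_pos])
    fix n
    have ghost_rhs: "[ghost p (a [^]\<^bsub>W p\<^esub> p \<oplus>\<^bsub>W p\<^esub> add_pow (W p) p ?c) n m = ghost p a (Suc n) m] (mod int p ^ m)" for m
    proof -
      have "[ghost p (a [^]\<^bsub>W p\<^esub> p \<oplus>\<^bsub>W p\<^esub> add_pow (W p) p ?c) n m
          = ghost p (a [^]\<^bsub>W p\<^esub> p) n m + int p * ?G n m] (mod int p ^ m)"
        using ghost_add_add_pow[OF W_pow(1)[OF a] c] witt_of_ghost(2)[OF prime G] by simp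
      also have "[ghost p (a [^]\<^bsub>W p\<^esub> p) n m + int p * ?G n m
          = ghost p a n m ^ p + (ghost p a (Suc n) m - ghost p a n m ^ p)] (mod int p ^ m)"
        using dwork_family_ghost_delta(2)[OF dwork_family_ghost[OF prime a]]
        by (intro cong_add W_pow(2)[OF a])
      finally show ?thesis by simp
    qed
    show "ghost p (WF p a) n = ghost p (a [^]\<^bsub>W p\<^esub> p \<oplus>\<^bsub>W p\<^esub> add_pow (W p) p ?c) n"
      unfolding WF(2)[OF a]
      by (rule Zp_eqI[OF ghost_in_carrier[OF a p_pos] ghost_in_carrier[OF rhs p_pos]])
        (rule cong_sym, rule ghost_rhs)
  qed
qed

lemma Wdelta:
  assumes a: "a \<in> Wcarrier p"
  shows "Wdelta p a \<in> Wcarrier p"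
    and "WF p a = a [^]\<^bsub>W p\<^esub> p \<oplus>\<^bsub>W p\<^esub> add_pow (W p) p (Wdelta p a)"
proof -
  obtain c where c: "c \<in> Wcarrier p" "WF p a = a [^]\<^bsub>W p\<^esub> p \<oplus>\<^bsub>W p\<^esub> add_pow (W p) p c"
    using WF_eq_pow_add_pow[OF a] by blast
  have "Wdelta p a = c"
    unfolding Wdelta_def
    using c W_add_pow_prime_cancel[OF W_pow(1)[OF a]] by (intro the_equality) auto
  then show "Wdelta p a \<in> Wcarrier p"
    and "WF p a = a [^]\<^bsub>W p\<^esub> p \<oplus>\<^bsub>W p\<^esub> add_pow (W p) p (Wdelta p a)"
    using c by simp_all
qed

lemma W_add_self_eq_zero:
  assumes a: "a \<in> Wcarrier p" and idem: "a \<oplus>\<^bsub>W p\<^esub> a = a"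
  shows "a = \<zero>\<^bsub>W p\<^esub>"
proof (rule ghost_inj[OF a W_zero(1) p_pos])
  fix n
  have "ghost p a n m = 0" for m
  proof -
    have "(ghost p a n m + ghost p a n m) mod int p ^ m = ghost p a n m mod int p ^ m"
      using W_add(2)[OF a a, of n] idem Zp_mod[OF ghost_in_carrier[OF a p_pos]]
      by (simp add: Zp_add fun_eq_iff)
    then have "[ghost p a n m + ghost p a n m = ghost p a n m + 0] (mod int p ^ m)"
      by (simp add: cong_def)
    then have "[ghost p a n m = 0] (mod int p ^ m)"
      by (simp only: cong_add_lcancel)
    then show ?thesis
      using Zp_mod[OF ghost_in_carrier[OF a p_pos]] by (simp add: cong_def)
  qed
  then show "ghost p a n = ghost p \<zero>\<^bsub>W p\<^esub> n"
    by (simp add: W_zero(2) Zp_zero fun_eq_iff)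
qed

lemma W_Units_if_ghost_units:
  assumes a: "a \<in> Wcarrier p" and units: "\<And>n. ghost p a n 1 \<noteq> 0"
  shows "a \<in> Units (W p)"
proof -
  let ?H = "\<lambda>n. Zp_inverse p (ghost p a n)"
  have inverse: "?H n \<in> carrier (Zp p)" "ghost p a n \<otimes>\<^bsub>Zp p\<^esub> ?H n = \<one>\<^bsub>Zp p\<^esub>" for n
    using Zp_inverse[OF prime ghost_in_carrier[OF a p_pos] units] by auto
  have "dwork_family p ?H"
    using inverse(1) dwork_family_ghost[OF prime a] by (simp add: dwork_family_def Zp_inverse_def)
  then have b: "witt_of_ghost p ?H \<in> Wcarrier p" "ghost p (witt_of_ghost p ?H) n = ?H n" for n
    using witt_of_ghost[OF prime] by auto
  have "a \<otimes>\<^bsub>W p\<^esub> witt_of_ghost p ?H = \<one>\<^bsub>W p\<^esub>"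
    using inverse(2) b W_one by (intro ghost_inj[OF W_mult(1)[OF a b(1)] W_one(1) p_pos]) (simp add: W_mult(2)[OF a b(1)])
  moreover have "witt_of_ghost p ?H \<otimes>\<^bsub>W p\<^esub> a = \<one>\<^bsub>W p\<^esub>"
    using inverse(2) b W_one by (intro ghost_inj[OF W_mult(1)[OF b(1) a] W_one(1) p_pos])
      (simp add: W_mult(2)[OF b(1) a] Zp_mult mult.commute)
  ultimately show ?thesis
    using a b(1) by (auto simp: Units_def)
qed

end

section \<open>The delta-map from power series\<close>

lemma PS_carrier_iff: "s \<in> carrier (PS p) \<longleftrightarrow> (\<forall>k. s k \<in> carrier (Zp p))"
  by (simp add: PS_def)

lemma PS_add_closed:
  "s \<in> carrier (PS p) \<Longrightarrow> t \<in> carrier (PS p) \<Longrightarrow> p > 0 \<Longrightarrow> s \<oplus>\<^bsub>PS p\<^esub> t \<in> carrier (PS p)"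
  by (simp add: PS_def Zp_add_closed)

lemma PS_mult_closed:
  assumes "s \<in> carrier (PS p)" and "t \<in> carrier (PS p)" and "p > 0"
  shows "s \<otimes>\<^bsub>PS p\<^esub> t \<in> carrier (PS p)"
proof -
  have "(\<lambda>n. (\<Sum>i\<le>k. s i n * t (k - i) n) mod int p ^ n) \<in> carrier (Zp p)" for k
    by (rule Zp_memI) (use assms in \<open>auto simp: PS_carrier_iff intro!: cong_sum cong_mult Zp_cong\<close>)
  then show ?thesis by (simp add: PS_def)
qed

lemma PS_one_closed: "p > 0 \<Longrightarrow> \<one>\<^bsub>PS p\<^esub> \<in> carrier (PS p)"
  and PS_zero_closed: "p > 0 \<Longrightarrow> \<zero>\<^bsub>PS p\<^esub> \<in> carrier (PS p)"
  and lam_closed: "p > 0 \<Longrightarrow> lam p \<in> carrier (PS p)"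
  using Zp_one_closed Zp_zero_closed by (simp_all add: PS_def lam_def)

lemma PS_zero_add_zero: "\<zero>\<^bsub>PS p\<^esub> \<oplus>\<^bsub>PS p\<^esub> \<zero>\<^bsub>PS p\<^esub> = \<zero>\<^bsub>PS p\<^esub>"
  by (simp add: PS_def Zp_add Zp_zero)

lemma PS_pow_closed:
  "s \<in> carrier (PS p) \<Longrightarrow> p > 0 \<Longrightarrow> s [^]\<^bsub>PS p\<^esub> (k::nat) \<in> carrier (PS p)"
  by (induction k) (simp_all add: PS_mult_closed PS_one_closed)

lemma PS_add_pow_closed:
  "s \<in> carrier (PS p) \<Longrightarrow> p > 0 \<Longrightarrow> add_pow (PS p) (k::nat) s \<in> carrier (PS p)"
  by (induction k) (simp_all add: add_pow_0 add_pow_Suc PS_add_closed PS_zero_closed)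

context
  fixes p :: nat and \<iota> :: "(nat \<Rightarrow> nat \<Rightarrow> int) \<Rightarrow> nat \<Rightarrow> nat \<Rightarrow> int"
  assumes prime: "prime p" and hom: "\<iota> \<in> ring_hom (PS p) (W p)"
begin

lemma iota_closed: "s \<in> carrier (PS p) \<Longrightarrow> \<iota> s \<in> Wcarrier p"
  using ring_hom_closed[OF hom] by simp

lemma iota_zero: "\<iota> \<zero>\<^bsub>PS p\<^esub> = \<zero>\<^bsub>W p\<^esub>"
proof (rule W_add_self_eq_zero[OF prime])
  have zero: "\<zero>\<^bsub>PS p\<^esub> \<in> carrier (PS p)"
    using PS_zero_closed prime prime_gt_0_nat by blast
  then show "\<iota> \<zero>\<^bsub>PS p\<^esub> \<in> Wcarrier p"
    by (rule iota_closed)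
  show "\<iota> \<zero>\<^bsub>PS p\<^esub> \<oplus>\<^bsub>W p\<^esub> \<iota> \<zero>\<^bsub>PS p\<^esub> = \<iota> \<zero>\<^bsub>PS p\<^esub>"
    using ring_hom_add[OF hom zero zero] by (simp add: PS_zero_add_zero)
qed

lemma iota_pow:
  assumes "s \<in> carrier (PS p)"
  shows "\<iota> (s [^]\<^bsub>PS p\<^esub> (k::nat)) = \<iota> s [^]\<^bsub>W p\<^esub> k"
  using assms prime_gt_0_nat[OF prime]
  by (induction k) (simp_all add: ring_hom_one[OF hom] ring_hom_mult[OF hom] PS_pow_closed)

lemma iota_add_pow:
  assumes "s \<in> carrier (PS p)"
  shows "\<iota> (add_pow (PS p) (k::nat) s) = add_pow (W p) k (\<iota> s)"
proof (induction k)
  case 0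
  show ?case by (simp add: add_pow_0 iota_zero)
next
  case (Suc k)
  then show ?case
    using ring_hom_add[OF hom PS_add_pow_closed[OF assms prime_gt_0_nat[OF prime]] assms]
    by (simp add: add_pow_Suc)
qed

lemma iota_frobenius:
  assumes "delta_ring_hom (PS p) \<delta> (W p) (Wdelta p) \<iota>"
    and s: "s \<in> carrier (PS p)" and \<delta>s: "\<delta> s \<in> carrier (PS p)"
  shows "\<iota> (s [^]\<^bsub>PS p\<^esub> p \<oplus>\<^bsub>PS p\<^esub> add_pow (PS p) p (\<delta> s)) = WF p (\<iota> s)"
proof -
  have p0: "p > 0" using prime prime_gt_0_nat by blast
  have "\<iota> (s [^]\<^bsub>PS p\<^esub> p \<oplus>\<^bsub>PS p\<^esub> add_pow (PS p) p (\<delta> s))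
      = \<iota> s [^]\<^bsub>W p\<^esub> p \<oplus>\<^bsub>W p\<^esub> add_pow (W p) p (\<iota> (\<delta> s))"
    using ring_hom_add[OF hom PS_pow_closed[OF s p0] PS_add_pow_closed[OF \<delta>s p0]]
    by (simp add: iota_pow[OF s] iota_add_pow[OF \<delta>s])
  also have "\<iota> (\<delta> s) = Wdelta p (\<iota> s)"
    using assms(1) s by (simp add: delta_ring_hom_def)
  finally show ?thesis
    using Wdelta(2)[OF prime iota_closed[OF s]] by simp
qed

lemma iota_frobenius_equation:
  assumes hom_\<delta>: "delta_ring_hom (PS p) \<delta> (W p) (Wdelta p) \<iota>"
    and s: "s \<in> carrier (PS p)" and \<delta>s: "\<delta> s \<in> carrier (PS p)"
    and eq: "s [^]\<^bsub>PS p\<^esub> p \<oplus>\<^bsub>PS p\<^esub> add_pow (PS p) p (\<delta> s) \<oplus>\<^bsub>PS p\<^esub> add_pow (PS p) p \<one>\<^bsub>PS p\<^esub>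
      = (s \<oplus>\<^bsub>PS p\<^esub> add_pow (PS p) p \<one>\<^bsub>PS p\<^esub>) [^]\<^bsub>PS p\<^esub> p"
  shows "WF p (\<iota> s) \<oplus>\<^bsub>W p\<^esub> add_pow (W p) p \<one>\<^bsub>W p\<^esub>
    = (\<iota> s \<oplus>\<^bsub>W p\<^esub> add_pow (W p) p \<one>\<^bsub>W p\<^esub>) [^]\<^bsub>W p\<^esub> p"
proof -
  have p0: "p > 0" using prime prime_gt_0_nat by blast
  have p_one: "add_pow (PS p) p \<one>\<^bsub>PS p\<^esub> \<in> carrier (PS p)"
    and \<iota>_p_one: "\<iota> (add_pow (PS p) p \<one>\<^bsub>PS p\<^esub>) = add_pow (W p) p \<one>\<^bsub>W p\<^esub>"
    using PS_one_closed[OF p0] by (simp_all add: PS_add_pow_closed[OF _ p0] iota_add_pow ring_hom_one[OF hom])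
  have "WF p (\<iota> s) \<oplus>\<^bsub>W p\<^esub> add_pow (W p) p \<one>\<^bsub>W p\<^esub>
      = \<iota> (s [^]\<^bsub>PS p\<^esub> p \<oplus>\<^bsub>PS p\<^esub> add_pow (PS p) p (\<delta> s) \<oplus>\<^bsub>PS p\<^esub> add_pow (PS p) p \<one>\<^bsub>PS p\<^esub>)"
    using s \<delta>s p0 p_one
    by (simp add: ring_hom_add[OF hom] PS_add_closed PS_pow_closed PS_add_pow_closed
        iota_frobenius[OF hom_\<delta> s \<delta>s] \<iota>_p_one)
  also have "\<dots> = (\<iota> s \<oplus>\<^bsub>W p\<^esub> add_pow (W p) p \<one>\<^bsub>W p\<^esub>) [^]\<^bsub>W p\<^esub> p"
    using s p0 p_one
    by (simp add: eq iota_pow PS_add_closed ring_hom_add[OF hom] \<iota>_p_one)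
  finally show ?thesis .
qed

end

section \<open>Ghost components of the image of lambda\<close>

definition lam_ghost :: "nat \<Rightarrow> nat \<Rightarrow> int" where
  "lam_ghost p n = ((\<lambda>x. (x + int p) ^ p - int p) ^^ n) 0"

lemma lam_ghost_0 [simp]: "lam_ghost p 0 = 0"
  and lam_ghost_Suc: "lam_ghost p (Suc n) = (lam_ghost p n + int p) ^ p - int p"
  by (simp_all add: lam_ghost_def)

lemma ghost_eq_lam_ghost:
  assumes p: "prime p" and a: "a \<in> Wcarrier p" and a0: "a 0 = \<zero>\<^bsub>Zp p\<^esub>"
    and frob: "WF p a \<oplus>\<^bsub>W p\<^esub> add_pow (W p) p \<one>\<^bsub>W p\<^esub>
      = (a \<oplus>\<^bsub>W p\<^esub> add_pow (W p) p \<one>\<^bsub>W p\<^esub>) [^]\<^bsub>W p\<^esub> p"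
  shows "ghost p a n = Zp_of_int p (lam_ghost p n)"
proof -
  have one: "\<one>\<^bsub>W p\<^esub> \<in> Wcarrier p" and ghost_one: "[ghost p \<one>\<^bsub>W p\<^esub> n m = 1] (mod int p ^ m)" for n m
    using W_one[OF p] by (simp_all add: Zp_one cong_def)
  have plus_p: "[ghost p (b \<oplus>\<^bsub>W p\<^esub> add_pow (W p) p \<one>\<^bsub>W p\<^esub>) n m = ghost p b n m + int p] (mod int p ^ m)"
    if "b \<in> Wcarrier p" for b n m
    using cong_trans[OF ghost_add_add_pow[OF p that one] cong_add[OF cong_refl cong_mult[OF cong_refl ghost_one]]]
    by simp
  have rec: "[ghost p a (Suc n) m + int p = (ghost p a n m + int p) ^ p] (mod int p ^ m)" for n m
  proof -
    have "[ghost p a (Suc n) m + int p = ghost p (WF p a \<oplus>\<^bsub>W p\<^esub> add_pow (W p) p \<one>\<^bsub>W p\<^esub>) n m] (mod int p ^ m)"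
      using plus_p[OF WF(1)[OF p a]] by (simp add: WF(2)[OF p a] cong_sym)
    also have "[ghost p (WF p a \<oplus>\<^bsub>W p\<^esub> add_pow (W p) p \<one>\<^bsub>W p\<^esub>) n m
        = ghost p (a \<oplus>\<^bsub>W p\<^esub> add_pow (W p) p \<one>\<^bsub>W p\<^esub>) n m ^ p] (mod int p ^ m)"
      unfolding frob using a one by (intro W_pow(2)[OF p] W_add(1)[OF p] W_add_pow(1)[OF p])
    also have "[ghost p (a \<oplus>\<^bsub>W p\<^esub> add_pow (W p) p \<one>\<^bsub>W p\<^esub>) n m ^ p
        = (ghost p a n m + int p) ^ p] (mod int p ^ m)"
      by (intro cong_pow plus_p[OF a])
    finally show ?thesis .
  qed
  have "[ghost p a n m = lam_ghost p n] (mod int p ^ m)" for m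
  proof (induction n)
    case 0
    then show ?case using p by (simp add: ghost_eq_ghost_sum_mod ghost_sum_def a0 Zp_zero)
  next
    case (Suc n)
    have "[ghost p a (Suc n) m + int p - int p = (lam_ghost p n + int p) ^ p - int p] (mod int p ^ m)"
      using cong_trans[OF rec cong_pow[OF cong_add[OF Suc cong_refl]]] by (intro cong_diff cong_refl)
    then show ?case by (simp add: lam_ghost_Suc)
  qed
  then show ?thesis
    using Zp_mod[OF ghost_in_carrier[OF a prime_gt_0_nat[OF p]]]
    by (simp add: Zp_of_int_def fun_eq_iff cong_def)
qed

lemma lam_ghost_dvd: "p > 0 \<Longrightarrow> int p dvd lam_ghost p n"
proof (induction n)
  case (Suc n)
  have "int p dvd lam_ghost p n + int p"
    using Suc by simp
  also have "lam_ghost p n + int p dvd (lam_ghost p n + int p) ^ p"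
    using Suc.prems by (simp add: dvd_power)
  finally show ?case by (simp add: lam_ghost_Suc)
qed simp

lemma lam_ghost_diff_dvd:
  assumes p3: "3 \<le> p"
  shows "int p ^ (2 * n + 3) dvd lam_ghost p (n + 2) - lam_ghost p (n + 1)"
proof -
  have step: "int p ^ (k + 2) dvd lam_ghost p (Suc (Suc j)) - lam_ghost p (Suc j)"
    if "int p ^ k dvd lam_ghost p (Suc j) - lam_ghost p j" for j k
  proof -
    have "int p ^ k * int p ^ (p - 1) dvd (lam_ghost p (Suc j) + int p) ^ p - (lam_ghost p j + int p) ^ p"
      using that lam_ghost_dvd[of p] p3 by (intro power_diff_dvd_lift_strong) simp_all
    moreover have "int p ^ (k + 2) dvd int p ^ k * int p ^ (p - 1)"
      unfolding power_add[symmetric] using p3 by (intro le_imp_power_dvd) simp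
    ultimately have "int p ^ (k + 2) dvd (lam_ghost p (Suc j) + int p) ^ p - (lam_ghost p j + int p) ^ p"
      by (metis dvd_trans)
    moreover have "lam_ghost p (Suc (Suc j)) - lam_ghost p (Suc j)
        = (lam_ghost p (Suc j) + int p) ^ p - (lam_ghost p j + int p) ^ p"
      by (simp add: lam_ghost_Suc)
    ultimately show ?thesis by simp
  qed
  show ?thesis
  proof (induction n)
    case 0
    show ?case using step[of 1 0] lam_ghost_dvd[of p 1] p3 by (simp add: numeral_3_eq_3)
  next
    case (Suc n)
    then show ?case using step[of "2 * n + 3" "Suc n"] by (simp add: numeral_3_eq_3)
  qed
qed

(* The 0-th ghost component of x is invisible in V(F(x)); g 1/p keeps Dwork's congruences. *)
definition lam_ghost_quot :: "nat \<Rightarrow> nat \<Rightarrow> int" where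
  "lam_ghost_quot p n = lam_ghost p (max n 1) div int p"

lemma lam_ghost_eq_mult_quot:
  assumes "p > 0" and "n \<noteq> 0"
  shows "lam_ghost p n = int p * lam_ghost_quot p n"
proof -
  have "max n 1 = n" using assms(2) by simp
  then show ?thesis using lam_ghost_dvd[OF assms(1), of n] by (simp add: lam_ghost_quot_def)
qed

lemma lam_ghost_quot_cong:
  assumes p3: "3 \<le> p"
  shows "[lam_ghost_quot p (Suc n) = lam_ghost_quot p n] (mod int p ^ Suc n)"
proof (cases n)
  case (Suc k)
  have "int p ^ Suc (Suc (Suc k)) dvd lam_ghost p (k + 2) - lam_ghost p (k + 1)"
    using lam_ghost_diff_dvd[OF p3, of k] by (rule dvd_trans[rotated]) (rule le_imp_power_dvd, simp)
  then have "int p * int p ^ Suc n dvd int p * (lam_ghost_quot p (Suc n) - lam_ghost_quot p n)"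
    using lam_ghost_eq_mult_quot[of p "Suc n"] lam_ghost_eq_mult_quot[of p n] Suc p3
    by (simp add: right_diff_distrib)
  then show ?thesis using p3 by (simp add: cong_iff_dvd_diff)
qed (simp add: lam_ghost_quot_def)

lemma lam_ghost_quot_mod_p:
  assumes p3: "3 \<le> p"
  shows "lam_ghost_quot p n mod int p = int p - 1"
proof -
  have "[lam_ghost_quot p n = lam_ghost_quot p 0] (mod int p)"
  proof (induction n)
    case (Suc n)
    have "[lam_ghost_quot p (Suc n) = lam_ghost_quot p n] (mod int p)"
      using lam_ghost_quot_cong[OF p3, of n] by (rule cong_dvd_modulus) simp
    then show ?case using Suc by (rule cong_trans)
  qed simp
  moreover have "lam_ghost_quot p 0 = int p ^ (p - 1) - 1"
  proof -
    have "int p ^ p = int p * int p ^ (p - 1)"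
      using p3 by (cases p) simp_all
    then show ?thesis using p3 by (simp add: lam_ghost_quot_def lam_ghost_Suc right_diff_distrib)
  qed
  moreover have "[int p ^ (p - 1) - 1 = - 1] (mod int p)"
    using p3 by (simp add: cong_iff_dvd_diff)
  ultimately show ?thesis
    using p3 by (simp add: cong_def zmod_zminus1_eq_if)
qed

lemma unit_with_ghost_VF_eq_lam_ghost:
  assumes p: "prime p" and p3: "3 \<le> p"
  obtains x where "x \<in> Units (W p)" and "\<And>n. ghost p (WV p (WF p x)) n = Zp_of_int p (lam_ghost p n)"
proof -
  have p0: "p > 0" using p3 by simp
  let ?G = "\<lambda>n. Zp_of_int p (lam_ghost_quot p n)"
  have "dwork_family p ?G"
    using lam_ghost_quot_cong[OF p3] Zp_of_int_closed[OF p0]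
    by (simp add: dwork_family_def Zp_of_int_def cong_def)
  then have x: "witt_of_ghost p ?G \<in> Wcarrier p" "ghost p (witt_of_ghost p ?G) n = ?G n" for n
    using witt_of_ghost[OF p] by auto
  show ?thesis
  proof
    show "witt_of_ghost p ?G \<in> Units (W p)"
      using lam_ghost_quot_mod_p[OF p3] p3
      by (intro W_Units_if_ghost_units[OF p x(1)]) (unfold x(2), simp add: Zp_of_int_def)
    show "ghost p (WV p (WF p (witt_of_ghost p ?G))) n = Zp_of_int p (lam_ghost p n)" for n
    proof (cases n)
      case 0
      then show ?thesis
        using WV(2)[OF p WF(1)[OF p x(1)]] by (simp add: Zp_zero Zp_of_int_def)
    next
      case (Suc k)
      have "ghost p (WV p (WF p (witt_of_ghost p ?G))) (Suc k) m
          = (int p * lam_ghost_quot p (Suc k)) mod int p ^ m" for m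
        unfolding WV(3)[OF p WF(1)[OF p x(1)]] WF(2)[OF p x(1)] x(2)
        by (simp add: Zp_of_int_def mod_mult_right_eq)
      then show ?thesis
        using Suc lam_ghost_eq_mult_quot[OF p0, of n] by (simp add: fun_eq_iff Zp_of_int_def)
    qed
  qed
qed

theorem lemma6p14:
  fixes p :: nat
    and \<delta> :: "(nat \<Rightarrow> nat \<Rightarrow> int) \<Rightarrow> (nat \<Rightarrow> nat \<Rightarrow> int)"
    and \<iota> :: "(nat \<Rightarrow> nat \<Rightarrow> int) \<Rightarrow> (nat \<Rightarrow> nat \<Rightarrow> int)"
  assumes "prime p" and "p \<ge> 3"
    and "delta_ring (PS p) p \<delta>"
    and "lam p [^]\<^bsub>PS p\<^esub> p \<oplus>\<^bsub>PS p\<^esub> add_pow (PS p) p (\<delta> (lam p)) \<oplus>\<^bsub>PS p\<^esub> add_pow (PS p) p \<one>\<^bsub>PS p\<^esub>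
         = (lam p \<oplus>\<^bsub>PS p\<^esub> add_pow (PS p) p \<one>\<^bsub>PS p\<^esub>) [^]\<^bsub>PS p\<^esub> p"
    and "delta_ring_hom (PS p) \<delta> (W p) (Wdelta p) \<iota>"
    and "\<forall>s\<in>carrier (PS p). \<iota> s 0 = s 0"
  shows "\<exists>x\<in>Units (W p). \<iota> (lam p) = WV p (WF p x)"
proof -
  note p = assms(1)
  have p0: "p > 0" using assms(2) by simp
  have hom: "\<iota> \<in> ring_hom (PS p) (W p)"
    using assms(5) by (simp add: delta_ring_hom_def)
  have lam: "lam p \<in> carrier (PS p)" and \<delta>_lam: "\<delta> (lam p) \<in> carrier (PS p)"
    using lam_closed[OF p0] assms(3) by (auto simp: delta_ring_def)
  have a: "\<iota> (lam p) \<in> Wcarrier p"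
    by (rule iota_closed[OF p hom lam])
  have "\<iota> (lam p) 0 = \<zero>\<^bsub>Zp p\<^esub>"
    using assms(6) lam by (simp add: lam_def)
  with a have ghost_a: "ghost p (\<iota> (lam p)) n = Zp_of_int p (lam_ghost p n)" for n
    by (rule ghost_eq_lam_ghost[OF p _ _ iota_frobenius_equation[OF p hom assms(5) lam \<delta>_lam assms(4)]])
  obtain x where x: "x \<in> Units (W p)"
    and ghost_VFx: "\<And>n. ghost p (WV p (WF p x)) n = Zp_of_int p (lam_ghost p n)"
    using unit_with_ghost_VF_eq_lam_ghost[OF p assms(2)] by blast
  have "x \<in> Wcarrier p"
    using x by (simp add: Units_def)
  then have "\<iota> (lam p) = WV p (WF p x)"
    using ghost_a ghost_VFx by (intro ghost_inj[OF a WV(1)[OF p WF(1)[OF p]] p0]) simp_all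
  then show ?thesis
    using x by blast
qed

end
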